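(* If a graph $G$ with at least two vertices belongs to $\mathcal{S}_3$, then $|E(G)|\ge 3|V(G)|-2$.
   Context: Graphs may have parallel edges but no loops. $G\in\mathcal{S}_3$ means: for every $\beta:V(G)\to\mathbb{Z}_3$ with $\sum_v\beta(v)\equiv0\pmod3$ there is a strongly-connected orientation $D$ of $G$ with $d^+_D(v)-d^-_D(v)\equiv\beta(v)\pmod3$ for all $v$. *)

theory Defs
  imports Main
begin

text \<open>A finite loopless multigraph: vertex set V, edge set E (edges are abstract
  objects, so parallel edges are allowed), and ends e = (x, y) gives the two
  distinct endpoints of edge e.\<close>
definition multigraph :: "'a set \<Rightarrow> 'e set \<Rightarrow> ('e \<Rightarrow> 'a \<times> 'a) \<Rightarrow> bool" where
  "multigraph V E ends \<longleftrightarrow> finite V \<and> finite E \<and>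
     (\<forall>e\<in>E. fst (ends e) \<in> V \<and> snd (ends e) \<in> V \<and> fst (ends e) \<noteq> snd (ends e))"

definition orientation :: "'e set \<Rightarrow> ('e \<Rightarrow> 'a \<times> 'a) \<Rightarrow> ('e \<Rightarrow> 'a \<times> 'a) \<Rightarrow> bool" where
  "orientation E ends D \<longleftrightarrow> (\<forall>e\<in>E. D e = ends e \<or> D e = prod.swap (ends e))"

definition outdeg :: "'e set \<Rightarrow> ('e \<Rightarrow> 'a \<times> 'a) \<Rightarrow> 'a \<Rightarrow> nat" where
  "outdeg E D v = card {e\<in>E. fst (D e) = v}"

definition indeg :: "'e set \<Rightarrow> ('e \<Rightarrow> 'a \<times> 'a) \<Rightarrow> 'a \<Rightarrow> nat" where
  "indeg E D v = card {e\<in>E. snd (D e) = v}"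

definition strongly_connected :: "'a set \<Rightarrow> 'e set \<Rightarrow> ('e \<Rightarrow> 'a \<times> 'a) \<Rightarrow> bool" where
  "strongly_connected V E D \<longleftrightarrow> (\<forall>u\<in>V. \<forall>v\<in>V. (u, v) \<in> (D ` E)\<^sup>*)"

text \<open>Membership in S_3; Z_3-valued functions are represented by integers modulo 3.\<close>
definition in_S3 :: "'a set \<Rightarrow> 'e set \<Rightarrow> ('e \<Rightarrow> 'a \<times> 'a) \<Rightarrow> bool" where
  "in_S3 V E ends \<longleftrightarrow>
     (\<forall>\<beta> :: 'a \<Rightarrow> int. (\<Sum>v\<in>V. \<beta> v) mod 3 = 0 \<longrightarrow>
        (\<exists>D. orientation E ends D \<and> strongly_connected V E D \<and>
             (\<forall>v\<in>V. (int (outdeg E D v) - int (indeg E D v)) mod 3 = \<beta> v mod 3)))"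

end

theory Submission
  imports Defs
begin

text \<open>Since outdeg - indeg = 2 outdeg - deg and 2 is invertible modulo 3, prescribing the net
  outdegree modulo 3 is the same as prescribing the outdegree itself modulo 3, subject only to the
  sum of the prescribed values being congruent to the number of edges. So a graph in S_3 has a strongly connected orientation
  in which all vertices but one have outdegree divisible by 3. Strong connectivity on at least two
  vertices makes every outdegree positive, hence at least 3 outside the exceptional vertex, and
  summing outdegrees gives |E| \<ge> 3(|V| - 1) + 1.\<close>

definition deg :: "'e set \<Rightarrow> ('e \<Rightarrow> 'a \<times> 'a) \<Rightarrow> 'a \<Rightarrow> nat" where
  "deg E ends v = card {e\<in>E. fst (ends e) = v \<or> snd (ends e) = v}"

lemma card_eq_sum_card_fibres:
  assumes "finite E" "finite V" "f ` E \<subseteq> V"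
  shows "(\<Sum>v\<in>V. card {e\<in>E. f e = v}) = card E"
  using sum.group[OF assms, of "\<lambda>_. 1::nat"] by simp

lemma orientation_swap:
  "orientation E ends D \<Longrightarrow> orientation E ends (prod.swap \<circ> D)"
  by (auto simp: orientation_def)

lemma indeg_eq_outdeg_swap: "indeg E D v = outdeg E (prod.swap \<circ> D) v"
  by (simp add: indeg_def outdeg_def)

lemma orientation_arc:
  "orientation E ends D \<Longrightarrow> e \<in> E \<Longrightarrow> D e = ends e \<or> D e = prod.swap (ends e)"
  by (simp add: orientation_def)

lemma orientation_tail_in_vertices:
  assumes "multigraph V E ends" "orientation E ends D" "e \<in> E"
  shows "fst (D e) \<in> V"
  using orientation_arc[OF assms(2,3)] assms(1,3) by (auto simp: multigraph_def)

lemma outdeg_plus_indeg: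
  assumes "multigraph V E ends" "orientation E ends D"
  shows "outdeg E D v + indeg E D v = deg E ends v"
proof -
  have no_loop: "fst (D e) \<noteq> snd (D e)" if "e \<in> E" for e
    using orientation_arc[OF assms(2) that] assms(1) that by (auto simp: multigraph_def)
  have same_ends: "(fst (D e) = v \<or> snd (D e) = v) \<longleftrightarrow> (fst (ends e) = v \<or> snd (ends e) = v)"
    if "e \<in> E" for e
    using orientation_arc[OF assms(2) that] by auto
  have "finite E" using assms(1) by (simp add: multigraph_def)
  then have "card {e\<in>E. fst (D e) = v} + card {e\<in>E. snd (D e) = v}
      = card ({e\<in>E. fst (D e) = v} \<union> {e\<in>E. snd (D e) = v})"
    by (intro card_Un_disjoint[symmetric]) (auto dest: no_loop)
  also have "{e\<in>E. fst (D e) = v} \<union> {e\<in>E. snd (D e) = v}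
      = {e\<in>E. fst (ends e) = v \<or> snd (ends e) = v}"
    using same_ends by blast
  finally show ?thesis unfolding outdeg_def indeg_def deg_def .
qed

lemma sum_outdeg:
  assumes "multigraph V E ends" "orientation E ends D"
  shows "(\<Sum>v\<in>V. outdeg E D v) = card E"
proof -
  have "(\<lambda>e. fst (D e)) ` E \<subseteq> V"
    using orientation_tail_in_vertices[OF assms] by blast
  then show ?thesis
    unfolding outdeg_def using assms(1) by (intro card_eq_sum_card_fibres) (auto simp: multigraph_def)
qed

lemma sum_deg:
  assumes "multigraph V E ends"
  shows "(\<Sum>v\<in>V. deg E ends v) = 2 * card E"
proof -
  have D: "orientation E ends ends" by (simp add: orientation_def)
  have "(\<Sum>v\<in>V. deg E ends v) = (\<Sum>v\<in>V. outdeg E ends v) + (\<Sum>v\<in>V. indeg E ends v)"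
    by (simp add: outdeg_plus_indeg[OF assms D] sum.distrib[symmetric])
  also have "\<dots> = card E + card E"
    unfolding indeg_eq_outdeg_swap
    using sum_outdeg[OF assms D] sum_outdeg[OF assms orientation_swap[OF D]] by simp
  finally show ?thesis by simp
qed

lemma mod3_eq_of_sum_and_diff:
  fixes x y c d :: int
  assumes "x + y = d" "(x - y) mod 3 = (2 * c - d) mod 3"
  shows "x mod 3 = c mod 3"
proof -
  have "x - y - (2 * c - d) = 2 * (x - c)" using assms(1) by simp
  then have "3 dvd 2 * (x - c)" using assms(2) by (metis mod_eq_dvd_iff)
  then have "3 dvd x - c" by presburger
  then show ?thesis by (simp add: mod_eq_dvd_iff)
qed

lemma in_S3E:
  assumes "in_S3 V E ends" "(\<Sum>v\<in>V. \<beta> v) mod 3 = 0"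
  obtains D where "orientation E ends D" "strongly_connected V E D"
    "\<forall>v\<in>V. (int (outdeg E D v) - int (indeg E D v)) mod 3 = \<beta> v mod 3"
proof -
  from assms(1)[unfolded in_S3_def, THEN spec[of _ \<beta>], THEN mp, OF assms(2)]
  obtain D where "orientation E ends D \<and> strongly_connected V E D \<and>
      (\<forall>v\<in>V. (int (outdeg E D v) - int (indeg E D v)) mod 3 = \<beta> v mod 3)" ..
  then show ?thesis using that by blast
qed

lemma in_S3_prescribed_outdeg_mod3:
  fixes c :: "'a \<Rightarrow> int"
  assumes G: "multigraph V E ends" and "in_S3 V E ends"
    and c: "(\<Sum>v\<in>V. c v) mod 3 = int (card E) mod 3"
  obtains D where "orientation E ends D" "strongly_connected V E D"
    "\<And>v. v \<in> V \<Longrightarrow> int (outdeg E D v) mod 3 = c v mod 3"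
proof -
  have "(\<Sum>v\<in>V. 2 * c v - int (deg E ends v)) = 2 * ((\<Sum>v\<in>V. c v) - int (card E))"
    unfolding sum_subtractf sum_distrib_left[symmetric]
    using arg_cong[OF sum_deg[OF G], of int] by simp
  moreover have "3 dvd (\<Sum>v\<in>V. c v) - int (card E)"
    using c by (simp add: mod_eq_dvd_iff)
  ultimately have "(\<Sum>v\<in>V. 2 * c v - int (deg E ends v)) mod 3 = 0"
    by (simp only: dvd_imp_mod_0 dvd_mult)
  with \<open>in_S3 V E ends\<close> obtain D where D: "orientation E ends D" "strongly_connected V E D"
    and net: "\<forall>v\<in>V. (int (outdeg E D v) - int (indeg E D v)) mod 3 = (2 * c v - int (deg E ends v)) mod 3"
    by (rule in_S3E)
  have "int (outdeg E D v) mod 3 = c v mod 3" if "v \<in> V" for v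
  proof (rule mod3_eq_of_sum_and_diff)
    show "int (outdeg E D v) + int (indeg E D v) = int (deg E ends v)"
      using outdeg_plus_indeg[OF G D(1), of v] by simp
    show "(int (outdeg E D v) - int (indeg E D v)) mod 3 = (2 * c v - int (deg E ends v)) mod 3"
      using net that by (rule bspec)
  qed
  with D show ?thesis by (rule that)
qed

lemma strongly_connected_outdeg_pos:
  assumes "finite E" "strongly_connected V E D" "card V \<ge> 2" "v \<in> V"
  shows "outdeg E D v > 0"
proof -
  have "\<not> V \<subseteq> {v}"
  proof
    assume "V \<subseteq> {v}"
    then have "card V \<le> 1" using card_mono[of "{v}" V] by simp
    with \<open>card V \<ge> 2\<close> show False by simp
  qed
  then obtain u where "u \<in> V" "u \<noteq> v" by blast
  then have "(v, u) \<in> (D ` E)\<^sup>*" using assms(2,4) unfolding strongly_connected_def by blast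
  then obtain y where "(v, y) \<in> D ` E"
    using \<open>u \<noteq> v\<close> by (cases rule: converse_rtranclE) auto
  then obtain e where "e \<in> E" "fst (D e) = v" by (metis fst_conv imageE)
  then have "{e\<in>E. fst (D e) = v} \<noteq> {}" by blast
  with \<open>finite E\<close> show ?thesis unfolding outdeg_def by (simp add: card_gt_0_iff)
qed

theorem mainTheorem7:
  fixes V :: "'a set" and E :: "'e set" and ends :: "'e \<Rightarrow> 'a \<times> 'a"
  assumes "multigraph V E ends"
    and "card V \<ge> 2"
    and "in_S3 V E ends"
  shows "int (card E) \<ge> 3 * int (card V) - 2"
proof -
  have fin: "finite V" "finite E" using assms(1) by (auto simp: multigraph_def)
  obtain w where w: "w \<in> V" using assms(2) by fastforce
  define c :: "'a \<Rightarrow> int" where "c v = (if v = w then int (card E) else 0)" for v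
  have "(\<Sum>v\<in>V. c v) = int (card E)" unfolding c_def using fin w by simp
  then obtain D where D: "orientation E ends D" "strongly_connected V E D"
    and out_mod3: "\<And>v. v \<in> V \<Longrightarrow> int (outdeg E D v) mod 3 = c v mod 3"
    using in_S3_prescribed_outdeg_mod3[OF assms(1,3)] by metis
  have pos: "outdeg E D v > 0" if "v \<in> V" for v
    using strongly_connected_outdeg_pos[OF fin(2) D(2) assms(2) that] .
  have three_le: "3 \<le> n" if "int n mod 3 = 0" "n > 0" for n :: nat
    using that by presburger
  have "3 \<le> outdeg E D v" if "v \<in> V - {w}" for v
    using out_mod3[of v] pos[of v] that by (intro three_le) (simp_all add: c_def)
  then have "3 * card (V - {w}) \<le> (\<Sum>v\<in>V - {w}. outdeg E D v)"
    using sum_mono[of "V - {w}" "\<lambda>_. 3::nat" "outdeg E D"] by simp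
  moreover have "card E = outdeg E D w + (\<Sum>v\<in>V - {w}. outdeg E D v)"
    using sum_outdeg[OF assms(1) D(1)] fin w by (simp add: sum.remove)
  moreover have "card (V - {w}) = card V - 1" using w by simp
  ultimately show ?thesis using pos[OF w] assms(2) by linarith
qed

end
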